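(* Under the setting in the context (in particular $\hat\tau$ permutation-invariant), for every subset $\mathcal S_u\subseteq\mathcal U$, every $j\in\mathcal S_u$ and every $k\in\mathcal C$, $$\mathbb E\Big[\frac{\mathbf 1\{R_j>\mathcal Q_j,\ T_k\le\hat\tau,\ \hat{\mathcal S}_u=\mathcal S_u\}}{\sum_{i\in\mathcal C\cup\{j\}}\mathbf 1\{T_i\le\hat\tau\}}\Big]=\mathbb E\Big[\frac{\mathbf 1\{R_k>\mathcal Q_j,\ T_k\le\hat\tau,\ \hat{\mathcal S}_u=\mathcal S_u\}}{\sum_{i\in\mathcal C\cup\{j\}}\mathbf 1\{T_i\le\hat\tau\}}\Big],$$ where $\mathcal Q_j$ is the $\lceil(1-\alpha)(|\hat{\mathcal S}_c|+1)\rceil$-th smallest value of $\{R_i: i\in\hat{\mathcal S}_c\cup\{j\}\}$.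
   Context: Setting: $\hat\mu,g:\mathbb R^d\to\mathbb R$ fixed deterministic measurable functions; calibration indices $\mathcal C$ ($|\mathcal C|=n$) and disjoint test indices $\mathcal U$ ($|\mathcal U|=m$); $(X_i,Y_i)$, $i\in\mathcal C\cup\mathcal U$, i.i.d.; $T_i=g(X_i)$, $R_i=|Y_i-\hat\mu(X_i)|$; $\alpha\in(0,1)$. The threshold is $\hat\tau=\tau(T_i:i\in\mathcal C\cup\mathcal U)$ for a deterministic measurable $\tau:\mathbb R^{n+m}\to\mathbb R$ invariant under permutations of its arguments; $\hat{\mathcal S}_u=\{i\in\mathcal U:T_i\le\hat\tau\}$ and $\hat{\mathcal S}_c=\{i\in\mathcal C:T_i\le\hat\tau\}$. On the event $\hat{\mathcal S}_u=\mathcal S_u\ni j$ the denominator is at least $1$. *)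

theory Defs
  imports "HOL-Probability.Probability"
begin

text \<open>A sample is a map \<open>\<omega>\<close> from indices to pairs \<open>(X_i, Y_i)\<close>.\<close>

definition score_T :: "('a \<Rightarrow> real) \<Rightarrow> (nat \<Rightarrow> 'a \<times> real) \<Rightarrow> nat \<Rightarrow> real" where
  "score_T g \<omega> i = g (fst (\<omega> i))"

definition resid_R :: "('a \<Rightarrow> real) \<Rightarrow> (nat \<Rightarrow> 'a \<times> real) \<Rightarrow> nat \<Rightarrow> real" where
  "resid_R mu \<omega> i = \<bar>snd (\<omega> i) - mu (fst (\<omega> i))\<bar>"

definition tau_hat :: "((nat \<Rightarrow> real) \<Rightarrow> real) \<Rightarrow> ('a \<Rightarrow> real) \<Rightarrow> nat set \<Rightarrow> nat set
    \<Rightarrow> (nat \<Rightarrow> 'a \<times> real) \<Rightarrow> real" where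
  "tau_hat tau g C U \<omega> = tau (\<lambda>i\<in>C \<union> U. score_T g \<omega> i)"

definition sel_set :: "((nat \<Rightarrow> real) \<Rightarrow> real) \<Rightarrow> ('a \<Rightarrow> real) \<Rightarrow> nat set \<Rightarrow> nat set
    \<Rightarrow> nat set \<Rightarrow> (nat \<Rightarrow> 'a \<times> real) \<Rightarrow> nat set" where
  "sel_set tau g C U A \<omega> = {i \<in> A. score_T g \<omega> i \<le> tau_hat tau g C U \<omega>}"

text \<open>k-th smallest element (1-based) of a finite multiset of reals.\<close>
definition kth_smallest :: "nat \<Rightarrow> real multiset \<Rightarrow> real" where
  "kth_smallest k M = sorted_list_of_multiset M ! (k - 1)"

definition Q_j :: "real \<Rightarrow> ((nat \<Rightarrow> real) \<Rightarrow> real) \<Rightarrow> ('a \<Rightarrow> real) \<Rightarrow> ('a \<Rightarrow> real)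
    \<Rightarrow> nat set \<Rightarrow> nat set \<Rightarrow> nat \<Rightarrow> (nat \<Rightarrow> 'a \<times> real) \<Rightarrow> real" where
  "Q_j \<alpha> tau g mu C U j \<omega> =
     (let Sc = sel_set tau g C U C \<omega> in
      kth_smallest (nat \<lceil>(1 - \<alpha>) * (real (card Sc) + 1)\<rceil>)
        (image_mset (resid_R mu \<omega>) (mset_set (Sc \<union> {j}))))"

end

theory Submission
  imports Defs
begin

text \<open>The sample is i.i.d., so swapping test point \<open>j\<close> with calibration point \<open>k\<close> is a
measure-preserving involution of the product space. The swap permutes the scores, so the
permutation-invariant threshold and the number of selected points among \<open>C \<union> {j}\<close> are unchanged.
On the event \<open>T\<^sub>k \<le> \<tau>\<close>, \<open>S\<^sub>u = Su\<close> both \<open>j\<close> and \<open>k\<close> are selected, so the swap maps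
\<open>S\<^sub>c \<union> {j}\<close> onto itself and leaves the quantile \<open>Q\<^sub>j\<close> unchanged, while it exchanges
\<open>R\<^sub>j\<close> and \<open>R\<^sub>k\<close>. Hence the swap carries one integrand to the other.\<close>

lemma has_bochner_integral_measure_preserving:
  fixes f :: "'x \<Rightarrow> 'b::{real_normed_vector, second_countable_topology}"
  assumes T: "T \<in> M \<rightarrow>\<^sub>M M" and distr: "distr M M T = M"
    and "has_bochner_integral M f x"
  shows "has_bochner_integral M (\<lambda>y. f (T y)) x"
  using assms(3)
proof cases
  case (1 s)
  have T_space: "T y \<in> space M" if "y \<in> space M" for y
    using measurable_space[OF T that] .
  have simple: "simple_function M (s i)" and finite_support: "emeasure M {y\<in>space M. s i y \<noteq> 0} \<noteq> \<infinity>" for i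
    using 1(2)[of i] by (auto elim: simple_bochner_integrable.cases)
  have emeasure_T: "emeasure M {y\<in>space M. Q (s i (T y))} = emeasure M {y\<in>space M. Q (s i y)}" for Q i
  proof -
    have "{y\<in>space M. Q (s i y)} = s i -` {v. Q v} \<inter> space M"
      by auto
    also have "\<dots> \<in> sets M"
      by (rule simple_functionD(2)[OF simple])
    finally have "{y\<in>space M. Q (s i y)} \<in> sets M" .
    moreover have "{y\<in>space M. Q (s i (T y))} = T -` {y\<in>space M. Q (s i y)} \<inter> space M"
      using T_space by auto
    ultimately show ?thesis
      using emeasure_distr[OF T] distr by metis
  qed
  have measure_T: "measure M {y\<in>space M. s i (T y) = z} = measure M {y\<in>space M. s i y = z}" for i z
    using emeasure_T[of "\<lambda>v. v = z" i] by (simp add: measure_def)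
  have "Bochner_Integration.simple_bochner_integral M (\<lambda>y. s i (T y))
      = Bochner_Integration.simple_bochner_integral M (s i)" for i
  proof -
    have "measure M {y\<in>space M. s i (T y) = z} *\<^sub>R z = 0"
      if "z \<notin> (\<lambda>y. s i (T y)) ` space M" for z
    proof -
      from that have "{y\<in>space M. s i (T y) = z} = {}"
        by blast
      then show ?thesis
        by (metis measure_empty scale_zero_left)
    qed
    moreover have "(\<lambda>y. s i (T y)) ` space M \<subseteq> s i ` space M"
      using T_space by auto
    ultimately have "Bochner_Integration.simple_bochner_integral M (\<lambda>y. s i (T y))
        = (\<Sum>z\<in>s i ` space M. measure M {y\<in>space M. s i (T y) = z} *\<^sub>R z)"
      unfolding simple_bochner_integral_def
      by (intro sum.mono_neutral_left simple_functionD(1)[OF simple]) auto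
    then show ?thesis
      unfolding simple_bochner_integral_def measure_T .
  qed
  moreover have "(\<integral>\<^sup>+y. norm (f (T y) - s i (T y)) \<partial>M) = (\<integral>\<^sup>+y. norm (f y - s i y) \<partial>M)" for i
    using nn_integral_distr[OF T, of "\<lambda>y. ennreal (norm (f y - s i y))"]
      1(1) borel_measurable_simple_function[OF simple] distr by simp
  ultimately show ?thesis
    using 1 T simple finite_support emeasure_T[of "\<lambda>v. v \<noteq> 0"]
    by (intro has_bochner_integral.intros[where s="\<lambda>i y. s i (T y)"])
      (auto simp: simple_bochner_integrable.simps intro: simple_function_comp)
qed

lemma integral_measure_preserving_involution:
  fixes f g :: "'x \<Rightarrow> 'b::{real_normed_vector, second_countable_topology}"
  assumes T: "T \<in> M \<rightarrow>\<^sub>M M" and distr: "distr M M T = M"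
    and involution: "\<And>x. x \<in> space M \<Longrightarrow> T (T x) = x"
    and f_T: "\<And>x. x \<in> space M \<Longrightarrow> f (T x) = g x"
  shows "integral\<^sup>L M f = integral\<^sup>L M g"
proof -
  have g_T: "g (T x) = f x" if "x \<in> space M" for x
    using f_T[OF measurable_space[OF T that]] involution[OF that] by simp
  have "has_bochner_integral M (\<lambda>y. f (T y)) x \<longleftrightarrow> has_bochner_integral M g x" for x
    by (rule has_bochner_integral_cong) (simp_all add: f_T)
  moreover have "has_bochner_integral M (\<lambda>y. g (T y)) x \<longleftrightarrow> has_bochner_integral M f x" for x
    by (rule has_bochner_integral_cong) (simp_all add: g_T)
  ultimately have same_integral: "has_bochner_integral M f x \<longleftrightarrow> has_bochner_integral M g x" for x
    using has_bochner_integral_measure_preserving[OF T distr] by blast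
  show ?thesis
  proof (cases "integrable M f")
    case True
    then show ?thesis
      using same_integral has_bochner_integral_integrable has_bochner_integral_integral_eq by metis
  next
    case False
    then have "\<not> integrable M g"
      using same_integral integrable.simps by metis
    with False show ?thesis
      by (simp add: not_integrable_integral_eq)
  qed
qed

definition permute_sample :: "nat set \<Rightarrow> (nat \<Rightarrow> nat) \<Rightarrow> (nat \<Rightarrow> 'b) \<Rightarrow> nat \<Rightarrow> 'b" where
  "permute_sample I \<pi> \<omega> = (\<lambda>n\<in>I. \<omega> (\<pi> n))"

lemma permute_sample_measurable:
  assumes "\<pi> permutes I"
  shows "permute_sample I \<pi> \<in> PiM I (\<lambda>_. M) \<rightarrow>\<^sub>M PiM I (\<lambda>_. M)"
  unfolding permute_sample_def
  using permutes_in_image[OF assms] by (intro measurable_restrict measurable_component_singleton) auto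

lemma distr_PiM_permute_sample:
  assumes "prob_space M" and "\<pi> permutes I"
  shows "distr (PiM I (\<lambda>_. M)) (PiM I (\<lambda>_. M)) (permute_sample I \<pi>) = PiM I (\<lambda>_. M)"
  using distr_PiM_reindex[of I "\<lambda>_. M" \<pi> I] assms permutes_in_image[OF assms(2)]
  by (auto simp: permute_sample_def[abs_def] permutes_inj_on)

lemma permute_sample_involution:
  assumes "\<pi> permutes I" and "\<And>i. \<pi> (\<pi> i) = i" and "\<omega> \<in> extensional I"
  shows "permute_sample I \<pi> (permute_sample I \<pi> \<omega>) = \<omega>"
  using assms permutes_in_image[OF assms(1)]
  by (auto simp: permute_sample_def extensional_def fun_eq_iff)

lemma score_T_permute_sample:
  "i \<in> I \<Longrightarrow> score_T g (permute_sample I \<pi> \<omega>) i = score_T g \<omega> (\<pi> i)"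
  by (simp add: score_T_def permute_sample_def)

lemma resid_R_permute_sample:
  "i \<in> I \<Longrightarrow> resid_R mu (permute_sample I \<pi> \<omega>) i = resid_R mu \<omega> (\<pi> i)"
  by (simp add: resid_R_def permute_sample_def)

lemma tau_hat_permute_sample:
  assumes "\<And>t. tau (\<lambda>i\<in>C \<union> U. t (\<pi> i)) = tau (\<lambda>i\<in>C \<union> U. t i)"
  shows "tau_hat tau g C U (permute_sample (C \<union> U) \<pi> \<omega>) = tau_hat tau g C U \<omega>"
proof -
  have "(\<lambda>i\<in>C \<union> U. score_T g (permute_sample (C \<union> U) \<pi> \<omega>) i)
      = (\<lambda>i\<in>C \<union> U. score_T g \<omega> (\<pi> i))"
    by (intro restrict_ext) (simp add: score_T_permute_sample)
  then show ?thesis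
    unfolding tau_hat_def using assms by simp
qed

lemma sum_score_T_permute_sample:
  assumes "\<pi> permutes A" and "A \<subseteq> I"
  shows "(\<Sum>i\<in>A. h (score_T g (permute_sample I \<pi> \<omega>) i)) = (\<Sum>i\<in>A. h (score_T g \<omega> i))"
proof -
  have "(\<Sum>i\<in>A. h (score_T g (permute_sample I \<pi> \<omega>) i)) = (\<Sum>i\<in>A. h (score_T g \<omega> (\<pi> i)))"
    using assms(2) by (intro sum.cong) (auto simp: score_T_permute_sample)
  also have "\<dots> = (\<Sum>i\<in>A. h (score_T g \<omega> i))"
    using sum.permute[OF assms(1), of "\<lambda>i. h (score_T g \<omega> i)"] by (simp add: comp_def)
  finally show ?thesis .
qed

lemma transpose_le_iff:
  fixes s :: "'i \<Rightarrow> 'r::order"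
  assumes "s j \<le> t" and "s k \<le> t"
  shows "s (Transposition.transpose j k i) \<le> t \<longleftrightarrow> s i \<le> t"
  using assms by (cases "i = j \<or> i = k") auto

text \<open>Either side forces both \<open>j\<close> and \<open>k\<close> below the threshold, and then the swap does not
change which test points are selected.\<close>
lemma selection_transpose_iff:
  fixes s :: "nat \<Rightarrow> 'r::order"
  assumes "j \<in> Su" and "Su \<subseteq> U" and "k \<notin> U"
  shows "(s j \<le> t \<and> {i \<in> U. s (Transposition.transpose j k i) \<le> t} = Su)
     \<longleftrightarrow> (s k \<le> t \<and> {i \<in> U. s i \<le> t} = Su)"
proof -
  have same_selection: "{i \<in> U. s (Transposition.transpose j k i) \<le> t} = {i \<in> U. s i \<le> t}"
    if "s j \<le> t" "s k \<le> t"
    using transpose_le_iff[where s=s, OF that] by blast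
  have "s k \<le> t" if "{i \<in> U. s (Transposition.transpose j k i) \<le> t} = Su"
    using that assms by auto
  moreover have "s j \<le> t" if "{i \<in> U. s i \<le> t} = Su"
    using that assms by auto
  ultimately show ?thesis
    using same_selection by metis
qed

text \<open>Both \<open>j\<close> and \<open>k\<close> lie in \<open>S\<^sub>c \<union> {j}\<close>, so the swap permutes that set and keeps its
multiset of residuals.\<close>
lemma Q_j_transpose:
  fixes \<omega> :: "nat \<Rightarrow> 'a \<times> real" and C U :: "nat set" and j k :: nat
  defines "\<omega>' \<equiv> permute_sample (C \<union> U) (Transposition.transpose j k) \<omega>"
  assumes "k \<in> C" and "j \<in> U"
    and tau_hat_eq: "tau_hat tau g C U \<omega>' = tau_hat tau g C U \<omega>"
    and selected: "score_T g \<omega> j \<le> tau_hat tau g C U \<omega>" "score_T g \<omega> k \<le> tau_hat tau g C U \<omega>"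
  shows "Q_j \<alpha> tau g mu C U j \<omega>' = Q_j \<alpha> tau g mu C U j \<omega>"
proof -
  have Sc: "sel_set tau g C U C \<omega>' = sel_set tau g C U C \<omega>"
    unfolding sel_set_def tau_hat_eq
  proof (intro Collect_cong conj_cong refl)
    fix i assume "i \<in> C"
    show "score_T g \<omega>' i \<le> tau_hat tau g C U \<omega> \<longleftrightarrow> score_T g \<omega> i \<le> tau_hat tau g C U \<omega>"
      unfolding \<omega>'_def score_T_permute_sample[OF UnI1[OF \<open>i \<in> C\<close>]]
      by (rule transpose_le_iff[where s="score_T g \<omega>", OF selected])
  qed
  define S where "S = sel_set tau g C U C \<omega> \<union> {j}"
  have "Transposition.transpose j k permutes S"
    using \<open>k \<in> C\<close> selected(2) by (intro permutes_swap_id) (simp_all add: S_def sel_set_def)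
  moreover have "S \<subseteq> C \<union> U"
    using \<open>j \<in> U\<close> by (auto simp: S_def sel_set_def)
  ultimately have "image_mset (resid_R mu \<omega>) (mset_set S) = image_mset (resid_R mu \<omega>') (mset_set S)"
    unfolding \<omega>'_def by (intro permutes_implies_image_mset_eq) (auto simp: resid_R_permute_sample)
  then show ?thesis
    unfolding Q_j_def Let_def Sc S_def by simp
qed

lemma miscoverage_event_transpose:
  fixes \<omega> :: "nat \<Rightarrow> 'a \<times> real" and C U :: "nat set" and j k :: nat
  defines "\<omega>' \<equiv> permute_sample (C \<union> U) (Transposition.transpose j k) \<omega>"
  assumes "C \<inter> U = {}" and "j \<in> Su" and "Su \<subseteq> U" and "k \<in> C"
    and tau_hat_eq: "tau_hat tau g C U \<omega>' = tau_hat tau g C U \<omega>"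
  shows "(resid_R mu \<omega>' j > Q_j \<alpha> tau g mu C U j \<omega>' \<and> score_T g \<omega>' k \<le> tau_hat tau g C U \<omega>'
          \<and> sel_set tau g C U U \<omega>' = Su)
     \<longleftrightarrow> (resid_R mu \<omega> k > Q_j \<alpha> tau g mu C U j \<omega> \<and> score_T g \<omega> k \<le> tau_hat tau g C U \<omega>
          \<and> sel_set tau g C U U \<omega> = Su)"
proof -
  define t where "t = tau_hat tau g C U \<omega>"
  have "j \<in> U" "k \<notin> U"
    using assms by auto
  have swapped: "resid_R mu \<omega>' j = resid_R mu \<omega> k" "score_T g \<omega>' k = score_T g \<omega> j"
    using \<open>j \<in> U\<close> \<open>k \<in> C\<close> by (simp_all add: \<omega>'_def resid_R_permute_sample score_T_permute_sample)
  have "sel_set tau g C U U \<omega>' = {i \<in> U. score_T g \<omega> (Transposition.transpose j k i) \<le> t}"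
    unfolding sel_set_def tau_hat_eq t_def[symmetric]
    unfolding \<omega>'_def by (auto simp: score_T_permute_sample)
  then have selection: "(score_T g \<omega>' k \<le> t \<and> sel_set tau g C U U \<omega>' = Su)
      \<longleftrightarrow> (score_T g \<omega> k \<le> t \<and> sel_set tau g C U U \<omega> = Su)"
    using selection_transpose_iff[OF \<open>j \<in> Su\<close> \<open>Su \<subseteq> U\<close> \<open>k \<notin> U\<close>, of "score_T g \<omega>" t]
    by (simp add: swapped sel_set_def t_def)
  moreover have "Q_j \<alpha> tau g mu C U j \<omega>' = Q_j \<alpha> tau g mu C U j \<omega>"
    if "score_T g \<omega> k \<le> t" and "sel_set tau g C U U \<omega> = Su"
  proof -
    have "score_T g \<omega> j \<le> t"
      using that(2) \<open>j \<in> Su\<close> by (auto simp: sel_set_def t_def)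
    with that(1) show ?thesis
      using Q_j_transpose[OF \<open>k \<in> C\<close> \<open>j \<in> U\<close>] tau_hat_eq by (simp add: \<omega>'_def t_def)
  qed
  ultimately show ?thesis
    unfolding swapped tau_hat_eq t_def[symmetric] by auto
qed

theorem lemma9:
  fixes P :: "('a::euclidean_space \<times> real) measure"
    and mu g :: "'a \<Rightarrow> real"
    and tau :: "(nat \<Rightarrow> real) \<Rightarrow> real"
    and C U Su :: "nat set" and j k :: nat and \<alpha> :: real
  assumes P: "prob_space P" "sets P = sets borel"
    and mu_meas: "mu \<in> borel_measurable borel"
    and g_meas: "g \<in> borel_measurable borel"
    and fin: "finite C" "finite U" and disj: "C \<inter> U = {}"
    and alpha: "0 < \<alpha>" "\<alpha> < 1"
    and tau_meas: "tau \<in> borel_measurable (PiM (C \<union> U) (\<lambda>_. borel))"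
    and tau_perm: "\<And>\<pi> t. \<pi> permutes (C \<union> U) \<Longrightarrow>
                      tau (\<lambda>i\<in>C \<union> U. t (\<pi> i)) = tau (\<lambda>i\<in>C \<union> U. t i)"
    and Su: "Su \<subseteq> U" and j: "j \<in> Su" and k: "k \<in> C"
  shows "(\<integral>\<omega>. indicator {\<omega>. resid_R mu \<omega> j > Q_j \<alpha> tau g mu C U j \<omega>
                         \<and> score_T g \<omega> k \<le> tau_hat tau g C U \<omega>
                         \<and> sel_set tau g C U U \<omega> = Su} \<omega>
            / (\<Sum>i\<in>C \<union> {j}. if score_T g \<omega> i \<le> tau_hat tau g C U \<omega> then 1 else 0)
          \<partial>(PiM (C \<union> U) (\<lambda>_. P)))
       = (\<integral>\<omega>. indicator {\<omega>. resid_R mu \<omega> k > Q_j \<alpha> tau g mu C U j \<omega>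
                         \<and> score_T g \<omega> k \<le> tau_hat tau g C U \<omega>
                         \<and> sel_set tau g C U U \<omega> = Su} \<omega>
            / (\<Sum>i\<in>C \<union> {j}. if score_T g \<omega> i \<le> tau_hat tau g C U \<omega> then 1 else 0)
          \<partial>(PiM (C \<union> U) (\<lambda>_. P)))"
proof -
  let "lebesgue_integral ?M ?f = lebesgue_integral ?M ?g" = ?thesis
  define \<pi> where "\<pi> = Transposition.transpose j k"
  have "j \<in> U"
    using Su j by auto
  have \<pi>_permutes: "\<pi> permutes C \<union> U" "\<pi> permutes C \<union> {j}"
    using \<open>j \<in> U\<close> k unfolding \<pi>_def by (auto intro: permutes_swap_id)
  have tau_hat_eq: "tau_hat tau g C U (permute_sample (C \<union> U) \<pi> \<omega>) = tau_hat tau g C U \<omega>" for \<omega>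
    by (rule tau_hat_permute_sample) (rule tau_perm[OF \<pi>_permutes(1)])
  have "C \<union> {j} \<subseteq> C \<union> U"
    using \<open>j \<in> U\<close> by auto
  have integrand_swap: "?f (permute_sample (C \<union> U) \<pi> \<omega>) = ?g \<omega>" for \<omega>
    unfolding sum_score_T_permute_sample[OF \<pi>_permutes(2) \<open>C \<union> {j} \<subseteq> C \<union> U\<close>,
        where h="\<lambda>x. if x \<le> tau_hat tau g C U (permute_sample (C \<union> U) \<pi> \<omega>) then 1 else 0"]
    unfolding indicator_def mem_Collect_eq
    unfolding miscoverage_event_transpose[OF disj j Su k tau_hat_eq[unfolded \<pi>_def], folded \<pi>_def]
    unfolding tau_hat_eq by simp
  have "permute_sample (C \<union> U) \<pi> (permute_sample (C \<union> U) \<pi> \<omega>) = \<omega>" if "\<omega> \<in> space ?M" for \<omega>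
    using that by (intro permute_sample_involution[OF \<pi>_permutes(1)]) (auto simp: \<pi>_def space_PiM PiE_def)
  with integrand_swap show ?thesis
    by (intro integral_measure_preserving_involution[where T="permute_sample (C \<union> U) \<pi>"]
        permute_sample_measurable[OF \<pi>_permutes(1)] distr_PiM_permute_sample[OF P(1) \<pi>_permutes(1)])
qed

end
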